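(* Let $d\ge2$ be finite and consider a $d$-dimensional quantum system with finitely many measurement settings and finitely many outcomes. A measurement $x$ is specified by effects $\{\mathcal{E}_{a|x}\}_a$ (positive semidefinite, $\sum_a\mathcal{E}_{a|x}=\mathbb{1}$) together with, for each outcome $a$, a post-measurement state $\sigma_{a|x}$; the same measurements are used at both time steps, so that $p(ab|xy)=\mathrm{tr}(\mathcal{E}_{a|x}\varrho_{in})\,\mathrm{tr}(\mathcal{E}_{b|y}\sigma_{a|x})$. For arbitrary real coefficients $\alpha_{abxy}$ let $\mathcal{R}=\sum_{a,b,x,y}\alpha_{abxy}\,p(ab|xy)$, and let $R(\mathcal{P})$ be the supremum of $\mathcal{R}$ over all initial states $\varrho_{in}$ with purity $\mathrm{tr}(\varrho_{in}^2)=\mathcal{P}$ and all choices of effects and post-measurement states. Then $R(\mathcal{P})$ is a monotonically non-decreasing function of $\mathcal{P}\in[1/d,1]$.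
   Context: The purity of a state $\varrho$ is $\mathrm{tr}(\varrho^2)$, which ranges from $1/d$ (maximally mixed state) to $1$ (pure states). *)

theory Defs
  imports "HOL-Analysis.Analysis"
begin

text \<open>Operators on C^d, with d = CARD('n), as complex 'n x 'n matrices.\<close>

definition psd :: "complex^'n^'n \<Rightarrow> bool" where
  "psd A \<longleftrightarrow> (\<forall>i j. A $ i $ j = cnj (A $ j $ i)) \<and>
     (\<forall>v::complex^'n. let q = (\<Sum>i\<in>UNIV. cnj (v $ i) * (A *v v) $ i) in Im q = 0 \<and> Re q \<ge> 0)"

definition density :: "complex^'n^'n \<Rightarrow> bool" where
  "density \<rho> \<longleftrightarrow> psd \<rho> \<and> trace \<rho> = 1"

definition purity :: "complex^'n^'n \<Rightarrow> real" where
  "purity \<rho> = Re (trace (\<rho> ** \<rho>))"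

definition valid_instrument ::
  "('a::finite \<Rightarrow> 'x \<Rightarrow> complex^'n^'n) \<Rightarrow> ('a \<Rightarrow> 'x \<Rightarrow> complex^'n^'n) \<Rightarrow> bool" where
  "valid_instrument E \<sigma> \<longleftrightarrow>
     (\<forall>a x. psd (E a x)) \<and> (\<forall>x. (\<Sum>a\<in>UNIV. E a x) = mat 1) \<and> (\<forall>a x. density (\<sigma> a x))"

definition prob ::
  "complex^'n^'n \<Rightarrow> ('a \<Rightarrow> 'x \<Rightarrow> complex^'n^'n) \<Rightarrow> ('a \<Rightarrow> 'x \<Rightarrow> complex^'n^'n)
    \<Rightarrow> 'a \<Rightarrow> 'a \<Rightarrow> 'x \<Rightarrow> 'x \<Rightarrow> real" where
  "prob \<rho> E \<sigma> a b x y = Re (trace (E a x ** \<rho>)) * Re (trace (E b y ** \<sigma> a x))"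

definition Rval ::
  "('a::finite \<Rightarrow> 'a \<Rightarrow> 'x::finite \<Rightarrow> 'x \<Rightarrow> real) \<Rightarrow> complex^'n^'n
     \<Rightarrow> ('a \<Rightarrow> 'x \<Rightarrow> complex^'n^'n) \<Rightarrow> ('a \<Rightarrow> 'x \<Rightarrow> complex^'n^'n) \<Rightarrow> real" where
  "Rval \<alpha> \<rho> E \<sigma> = (\<Sum>a\<in>UNIV. \<Sum>b\<in>UNIV. \<Sum>x\<in>UNIV. \<Sum>y\<in>UNIV. \<alpha> a b x y * prob \<rho> E \<sigma> a b x y)"

definition Rmax ::
  "('a::finite \<Rightarrow> 'a \<Rightarrow> 'x::finite \<Rightarrow> 'x \<Rightarrow> real) \<Rightarrow> 'n::finite itself \<Rightarrow> real \<Rightarrow> real" where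
  "Rmax \<alpha> _ P = Sup {Rval \<alpha> \<rho> E \<sigma> | (\<rho>::complex^'n^'n) E \<sigma>.
       density \<rho> \<and> purity \<rho> = P \<and> valid_instrument E \<sigma>}"

end

theory Submission
  imports Defs
begin

(*
  R is linear in the initial state: R(rho) = Re tr(M rho) for an operator M built from alpha and
  the instrument. Writing rho as a sum of rank-one matrices w w^*, peeled off one at a time as
  Schur complements, makes R(rho) a convex combination of values at pure states, so some pure
  state psi does at least as well as rho. Along the segment from rho to psi, R stays above R(rho)
  by linearity while the purity moves continuously from tr(rho^2) to 1, so by the intermediate
  value theorem every purity Q >= tr(rho^2) is reached. Hence every value attained at purity P is
  dominated by one attained at purity Q >= P. The segment from the maximally mixed state to a pure
  state shows that every purity in [1/d, 1] occurs, and |R| <= sum |alpha| bounds the suprema.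
*)

section \<open>Sesquilinear forms and positive semidefinite matrices\<close>

definition hermitian :: "complex^'n^'n \<Rightarrow> bool" where
  "hermitian A \<longleftrightarrow> (\<forall>i j. A$i$j = cnj (A$j$i))"

definition sesq :: "complex^'n^'n \<Rightarrow> complex^'n \<Rightarrow> complex^'n \<Rightarrow> complex" where
  "sesq A u v = (\<Sum>i\<in>UNIV. \<Sum>j\<in>UNIV. cnj (u$i) * A$i$j * v$j)"

definition outer :: "complex^'n \<Rightarrow> complex^'n^'n" where
  "outer w = (\<chi> i j. w$i * cnj (w$j))"

lemma sesq_matrix_vector_mult: "sesq A u v = (\<Sum>i\<in>UNIV. cnj (u$i) * (A *v v)$i)"
  by (simp add: sesq_def matrix_vector_mult_def sum_distrib_left mult.assoc)

lemma sesq_diff_left: "sesq A (u - u') v = sesq A u v - sesq A u' v"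
  by (simp add: sesq_def ring_distribs sum_subtractf)

lemma sesq_diff_right: "sesq A u (v - v') = sesq A u v - sesq A u v'"
  by (simp add: sesq_def ring_distribs sum_subtractf)

lemma sesq_smult_left: "sesq A (c *s u) v = cnj c * sesq A u v"
  by (simp add: sesq_def sum_distrib_left mult.assoc)

lemma sesq_smult_right: "sesq A u (c *s v) = c * sesq A u v"
  by (simp add: sesq_def sum_distrib_left algebra_simps)

lemma sesq_scaleR_left: "sesq A (r *\<^sub>R u) v = of_real r * sesq A u v"
  unfolding sesq_def vector_scaleR_component by (simp add: scaleR_conv_of_real sum_distrib_left mult_ac)

lemma sesq_scaleR_right: "sesq A u (r *\<^sub>R v) = of_real r * sesq A u v"
  unfolding sesq_def vector_scaleR_component by (simp add: scaleR_conv_of_real sum_distrib_left mult_ac)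

lemma sesq_add_matrix: "sesq (A + B) u v = sesq A u v + sesq B u v"
  by (simp add: sesq_def ring_distribs sum.distrib)

lemma sesq_diff_matrix: "sesq (A - B) u v = sesq A u v - sesq B u v"
  by (simp add: sesq_def ring_distribs sum_subtractf)

lemma sesq_scaleR_matrix: "sesq (r *\<^sub>R A) u v = of_real r * sesq A u v"
  unfolding sesq_def vector_scaleR_component by (simp add: scaleR_conv_of_real sum_distrib_left mult_ac)

lemma sesq_axis_left: "sesq A (axis k 1) v = (A *v v) $ k"
  by (simp add: sesq_matrix_vector_mult axis_def if_distrib if_distribR cong del: if_weak_cong)

lemma sesq_axis_axis: "sesq A (axis i 1) (axis j 1) = A$i$j"
  unfolding sesq_axis_left
  by (simp add: matrix_vector_mult_def axis_def if_distrib if_distribR cong del: if_weak_cong)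

lemma sesq_hermitian_swap:
  assumes "hermitian A"
  shows "sesq A u v = cnj (sesq A v u)"
proof -
  have "cnj (A$j$i) = A$i$j" for i j
    using assms unfolding hermitian_def by (metis complex_cnj_cnj)
  then show ?thesis
    unfolding sesq_def by (subst (2) sum.swap) (simp add: mult_ac)
qed

lemma sesq_outer:
  "sesq (outer w) u v = (\<Sum>i\<in>UNIV. cnj (u$i) * w$i) * (\<Sum>j\<in>UNIV. cnj (w$j) * v$j)"
  unfolding sesq_def sum_product by (simp add: outer_def mult_ac)

lemma outer_0 [simp]: "outer 0 = 0"
  by (simp add: outer_def vec_eq_iff)

lemma norm_vec_power2: "(norm w)^2 = (\<Sum>i\<in>UNIV. (norm (w$i))^2)"
  by (simp add: norm_vec_def L2_set_def sum_nonneg)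

lemma sum_cnj_mult_self: "(\<Sum>i\<in>UNIV. cnj (v$i) * v$i) = of_real ((norm v)^2)"
  by (simp add: norm_vec_power2 complex_norm_square mult.commute del: of_real_power)

lemma sesq_mat_1: "sesq (mat 1) v v = of_real ((norm v)^2)"
  by (simp add: sesq_matrix_vector_mult sum_cnj_mult_self del: of_real_power)

lemma hermitian_add: "hermitian A \<Longrightarrow> hermitian B \<Longrightarrow> hermitian (A + B)"
  unfolding hermitian_def by (metis complex_cnj_add vector_add_component)

lemma hermitian_diff: "hermitian A \<Longrightarrow> hermitian B \<Longrightarrow> hermitian (A - B)"
  unfolding hermitian_def by (metis complex_cnj_diff vector_minus_component)

lemma hermitian_scaleR: "hermitian A \<Longrightarrow> hermitian (r *\<^sub>R A)"
  unfolding hermitian_def vector_scaleR_component by (metis complex_cnj_scaleR)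

lemma hermitian_outer: "hermitian (outer w)"
  by (simp add: hermitian_def outer_def)

lemma psd_iff_sesq:
  "psd A \<longleftrightarrow> hermitian A \<and> (\<forall>v. Im (sesq A v v) = 0 \<and> 0 \<le> Re (sesq A v v))"
  unfolding psd_def hermitian_def Let_def sesq_matrix_vector_mult by simp

lemma psd_hermitian: "psd A \<Longrightarrow> hermitian A"
  by (simp add: psd_iff_sesq)

lemma psd_sesq_nonneg: "psd A \<Longrightarrow> Im (sesq A v v) = 0 \<and> 0 \<le> Re (sesq A v v)"
  by (simp add: psd_iff_sesq)

lemma psdI:
  "hermitian A \<Longrightarrow> (\<And>v. Im (sesq A v v) = 0 \<and> 0 \<le> Re (sesq A v v)) \<Longrightarrow> psd A"
  by (simp add: psd_iff_sesq)

lemma psd_add: "psd A \<Longrightarrow> psd B \<Longrightarrow> psd (A + B)"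
  by (intro psdI) (simp_all add: hermitian_add psd_hermitian sesq_add_matrix psd_sesq_nonneg)

lemma psd_scaleR: "0 \<le> r \<Longrightarrow> psd A \<Longrightarrow> psd (r *\<^sub>R A)"
  by (intro psdI) (simp_all add: hermitian_scaleR psd_hermitian sesq_scaleR_matrix psd_sesq_nonneg)

lemma psd_outer: "psd (outer w)"
proof (rule psdI)
  fix v
  define z where "z = (\<Sum>j\<in>UNIV. cnj (w$j) * v$j)"
  have "(\<Sum>i\<in>UNIV. cnj (v$i) * w$i) = cnj z"
    by (simp add: z_def mult.commute)
  then have "sesq (outer w) v v = cnj z * z"
    unfolding sesq_outer z_def[symmetric] by simp
  also have "\<dots> = of_real ((cmod z)^2)"
    by (metis complex_norm_square mult.commute)
  finally show "Im (sesq (outer w) v v) = 0 \<and> 0 \<le> Re (sesq (outer w) v v)"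
    by simp
qed (rule hermitian_outer)

lemma psd_mat_1: "psd (mat 1)"
  by (rule psdI) (simp add: hermitian_def mat_def, simp add: sesq_mat_1 del: of_real_power)

lemma psd_0: "psd 0"
  using psd_scaleR[OF order_refl psd_mat_1] by simp

lemma psd_diag:
  assumes "psd A"
  shows "A$k$k = of_real (Re (A$k$k))" "0 \<le> Re (A$k$k)"
proof -
  have "A$k$k = cnj (A$k$k)"
    using psd_hermitian[OF assms] unfolding hermitian_def by blast
  then show "A$k$k = of_real (Re (A$k$k))"
    by (metis Reals_cnj_iff complex_is_Real_iff of_real_Re)
  show "0 \<le> Re (A$k$k)"
    using psd_sesq_nonneg[OF assms, of "axis k 1"] by (simp add: sesq_axis_axis)
qed

lemma psd_diag_eq_0_imp_column_eq_0:
  assumes "psd A" "A$k$k = 0"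
  shows "A$i$k = 0"
proof (rule ccontr)
  define z where "z = A$i$k"
  assume "A$i$k \<noteq> 0"
  then have "0 < cmod z" by (simp add: z_def)
  define t where "t = (Re (A$i$i) + 1) / (2 * (cmod z)^2)"
  define v where "v = axis i 1 - (of_real t * cnj z) *s axis k 1"
  have "A$k$i = cnj z"
    using psd_hermitian[OF assms(1)] unfolding hermitian_def z_def by blast
  then have "sesq A v v = A$i$i - of_real t * (z * cnj z) - of_real t * (z * cnj z)"
    unfolding v_def sesq_diff_left sesq_diff_right sesq_smult_left sesq_smult_right sesq_axis_axis
    using assms(2) by (simp add: z_def algebra_simps)
  also have "\<dots> = A$i$i - of_real (2 * t * (cmod z)^2)"
    by (simp flip: complex_norm_square)
  moreover have "2 * t * (cmod z)^2 = Re (A$i$i) + 1"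
    using \<open>0 < cmod z\<close> by (simp add: t_def)
  ultimately have "Re (sesq A v v) = -1"
    by simp
  then show False
    using psd_sesq_nonneg[OF assms(1), of v] by simp
qed

lemma psd_diag_eq_0_imp_row_eq_0:
  assumes "psd A" "A$k$k = 0"
  shows "A$k$i = 0"
  using psd_diag_eq_0_imp_column_eq_0[OF assms, of i] psd_hermitian[OF assms(1)]
  unfolding hermitian_def by (metis complex_cnj_zero)

section \<open>Rank-one decomposition of positive semidefinite matrices\<close>

lemma sesq_schur_complement:
  fixes v :: "complex^'n"
  assumes "hermitian A" "A$k$k = of_real c" "0 < c"
  defines "w \<equiv> \<chi> i. A$i$k / of_real (sqrt c)"
  defines "g \<equiv> (A *v v) $ k"
  shows "sesq (A - outer w) v v =
    sesq A (v - (g / of_real c) *s axis k 1) (v - (g / of_real c) *s axis k 1)"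
proof -
  have herm: "cnj (A$j$k) = A$k$j" "cnj (A$k$j) = A$j$k" for j
    using assms(1) unfolding hermitian_def by (metis complex_cnj_cnj)+
  have sqrt_c: "of_real (sqrt c) * of_real (sqrt c) = (of_real c :: complex)"
    using assms(3) by (simp flip: of_real_mult)
  have wv: "(\<Sum>j\<in>UNIV. cnj (w$j) * v$j) = g / of_real (sqrt c)"
    by (simp add: w_def g_def herm matrix_vector_mult_def sum_divide_distrib)
  have "(\<Sum>i\<in>UNIV. cnj (v$i) * w$i) = cnj g / of_real (sqrt c)"
    by (simp add: w_def g_def herm matrix_vector_mult_def sum_divide_distrib mult.commute)
  with wv have "sesq (outer w) v v = cnj g * g / of_real c"
    by (simp add: sesq_outer sqrt_c)
  moreover have "sesq A (axis k 1) v = g" "sesq A v (axis k 1) = cnj g"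
    by (simp_all add: sesq_hermitian_swap[OF assms(1)] sesq_axis_left g_def)
  ultimately show ?thesis
    unfolding sesq_diff_left sesq_diff_right sesq_smult_left sesq_smult_right sesq_diff_matrix
    using assms(3) by (simp add: sesq_axis_axis assms(2) field_simps)
qed

lemma psd_subtract_outer:
  assumes "psd A"
  obtains w where "psd (A - outer w)" "(A - outer w)$k$k = 0"
    "\<And>i. A$i$i = 0 \<Longrightarrow> (A - outer w)$i$i = 0"
proof (cases "A$k$k = 0")
  case True
  then show ?thesis
    using assms that[of 0] by simp
next
  case False
  define c where "c = Re (A$k$k)"
  have Akk: "A$k$k = of_real c" and "0 < c"
    using psd_diag[OF assms, of k] False by (auto simp: c_def less_eq_real_def)
  define w where "w = (\<chi> i. A$i$k / of_real (sqrt c))"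
  have herm: "hermitian A"
    using assms by (rule psd_hermitian)
  have "psd (A - outer w)"
  proof (rule psdI)
    show "hermitian (A - outer w)"
      using herm hermitian_outer by (rule hermitian_diff)
    show "Im (sesq (A - outer w) v v) = 0 \<and> 0 \<le> Re (sesq (A - outer w) v v)" for v
      unfolding w_def sesq_schur_complement[OF herm Akk \<open>0 < c\<close>]
      by (rule psd_sesq_nonneg[OF assms])
  qed
  moreover have "(A - outer w)$k$k = 0"
  proof -
    have "of_real (sqrt c) * of_real (sqrt c) = (of_real c :: complex)"
      using \<open>0 < c\<close> by (simp flip: of_real_mult)
    then show ?thesis
      using \<open>0 < c\<close> by (simp add: outer_def w_def Akk field_simps)
  qed
  moreover have "(A - outer w)$i$i = 0" if "A$i$i = 0" for i
    using psd_diag_eq_0_imp_row_eq_0[OF assms that, of k] that by (simp add: outer_def w_def)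
  ultimately show ?thesis
    using that by blast
qed

lemma psd_eq_sum_outer_on:
  assumes "finite S" "psd A" "\<And>i. i \<notin> S \<Longrightarrow> A$i$i = 0"
  shows "\<exists>W. A = (\<Sum>k\<in>S. outer (W k))"
  using assms
proof (induction S arbitrary: A rule: finite_induct)
  case empty
  then have "A$i$j = 0" for i j
    using psd_diag_eq_0_imp_column_eq_0 by blast
  then show ?case
    by (simp add: vec_eq_iff)
next
  case (insert k S)
  obtain w where w: "psd (A - outer w)" "(A - outer w)$k$k = 0"
    "\<And>i. A$i$i = 0 \<Longrightarrow> (A - outer w)$i$i = 0"
    using psd_subtract_outer[OF insert.prems(1)] by blast
  have "(A - outer w)$i$i = 0" if "i \<notin> S" for i
    using w(2,3) insert.prems(2) that by (cases "i = k") auto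
  then obtain W where W: "A - outer w = (\<Sum>j\<in>S. outer (W j))"
    using insert.IH[OF w(1)] by blast
  have "(\<Sum>j\<in>S. outer ((W(k := w)) j)) = (\<Sum>j\<in>S. outer (W j))"
    using insert.hyps(2) by (intro sum.cong) auto
  then have "A = (\<Sum>j\<in>insert k S. outer ((W(k := w)) j))"
    using insert.hyps(1,2) W by (simp add: algebra_simps)
  then show ?case
    by blast
qed

corollary psd_eq_sum_outer:
  fixes A :: "complex^'n^'n"
  assumes "psd A"
  obtains W :: "'n \<Rightarrow> complex^'n" where "A = (\<Sum>k\<in>UNIV. outer (W k))"
  using psd_eq_sum_outer_on[of UNIV A] assms by auto

lemma trace_matrix_mult: "trace (A ** B) = (\<Sum>i\<in>UNIV. \<Sum>j\<in>UNIV. A$i$j * B$j$i)"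
  by (simp add: trace_def matrix_matrix_mult_def)

lemma trace_mult_outer: "trace (A ** outer w) = sesq A w w"
  unfolding trace_matrix_mult sesq_def outer_def by (auto simp: mult_ac intro!: sum.cong)

lemma trace_outer: "trace (outer w) = of_real ((norm w)^2)"
  by (simp add: trace_def outer_def norm_vec_power2 complex_norm_square del: of_real_power)

lemma trace_sum: "trace (\<Sum>k\<in>K. A k) = (\<Sum>k\<in>K. trace (A k))"
  unfolding trace_def sum_component by (rule sum.swap)

lemma trace_mult_sum:
  fixes A :: "complex^'n^'n"
  shows "trace (A ** (\<Sum>k\<in>K. B k)) = (\<Sum>k\<in>K. trace (A ** B k))"
  by (induction K rule: infinite_finite_induct)
    (simp_all add: matrix_add_ldistrib trace_add trace_0[unfolded mat_0])

lemma trace_sum_mult: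
  fixes B :: "complex^'n^'n"
  shows "trace ((\<Sum>k\<in>K. A k) ** B) = (\<Sum>k\<in>K. trace (A k ** B))"
  by (simp add: trace_mul_sym[of _ B] trace_mult_sum)

lemma trace_scaleR: "trace (r *\<^sub>R (A :: complex^'n^'n)) = of_real r * trace A"
  unfolding trace_def vector_scaleR_component by (simp add: scaleR_conv_of_real sum_distrib_left)

lemma trace_mult_scaleR:
  fixes A B :: "complex^'n^'n"
  shows "trace (A ** (r *\<^sub>R B)) = of_real r * trace (A ** B)"
  unfolding trace_matrix_mult vector_scaleR_component
  by (simp add: scaleR_conv_of_real sum_distrib_left mult_ac)

lemma trace_scaleR_mult:
  fixes A B :: "complex^'n^'n"
  shows "trace ((r *\<^sub>R A) ** B) = of_real r * trace (A ** B)"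
  by (simp add: trace_mul_sym[of _ B] trace_mult_scaleR)

lemma trace_psd_mult_nonneg:
  fixes A B :: "complex^'n^'n"
  assumes "psd A" "psd B"
  shows "0 \<le> Re (trace (A ** B))"
proof -
  obtain W :: "'n \<Rightarrow> complex^'n" where "B = (\<Sum>k\<in>UNIV. outer (W k))"
    using psd_eq_sum_outer[OF assms(2)] .
  then have "Re (trace (A ** B)) = (\<Sum>k\<in>UNIV. Re (sesq A (W k) (W k)))"
    by (simp add: trace_mult_sum trace_mult_outer)
  also have "\<dots> \<ge> 0"
    using psd_sesq_nonneg[OF assms(1)] by (simp add: sum_nonneg)
  finally show ?thesis .
qed

lemma povm_trace_le_1:
  fixes E :: "'a::finite \<Rightarrow> complex^'n^'n"
  assumes "\<And>a. psd (E a)" "(\<Sum>a\<in>UNIV. E a) = mat 1" "density \<rho>"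
  shows "Re (trace (E a ** \<rho>)) \<le> 1"
proof -
  have "psd \<rho>" "trace \<rho> = 1"
    using assms(3) unfolding density_def by auto
  have "Re (trace (E a ** \<rho>)) \<le> (\<Sum>a'\<in>UNIV. Re (trace (E a' ** \<rho>)))"
    by (rule member_le_sum) (simp_all add: trace_psd_mult_nonneg assms(1) \<open>psd \<rho>\<close>)
  also have "\<dots> = Re (trace ((\<Sum>a'\<in>UNIV. E a') ** \<rho>))"
    by (simp add: trace_sum_mult)
  also have "\<dots> = 1"
    by (simp add: assms(2) \<open>trace \<rho> = 1\<close>)
  finally show ?thesis .
qed

section \<open>States of prescribed purity\<close>

lemma norm_axis_1_complex: "norm (axis k 1 :: complex^'n) = 1"
  by (simp add: inner_axis' norm_eq_1)

lemma density_outer: "norm u = 1 \<Longrightarrow> density (outer u)"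
  by (simp add: density_def psd_outer trace_outer)

lemma purity_outer: "norm u = 1 \<Longrightarrow> purity (outer u) = 1"
  by (simp add: purity_def trace_mult_outer sesq_outer sum_cnj_mult_self)

lemma density_maximally_mixed: "density ((1 / real CARD('n)) *\<^sub>R mat 1 :: complex^'n^'n)"
  by (simp add: density_def psd_scaleR psd_mat_1 trace_scaleR trace_I)

lemma purity_maximally_mixed:
  "purity ((1 / real CARD('n)) *\<^sub>R mat 1 :: complex^'n^'n) = 1 / real CARD('n)"
  by (simp add: purity_def trace_mult_scaleR trace_scaleR trace_I)

lemma density_convex:
  assumes "density A" "density B" "0 \<le> t" "t \<le> 1"
  shows "density ((1 - t) *\<^sub>R A + t *\<^sub>R B)"
  using assms unfolding density_def
  by (simp add: psd_add psd_scaleR trace_add trace_scaleR flip: of_real_add)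

lemma continuous_on_purity_segment:
  fixes A B :: "complex^'n^'n"
  shows "continuous_on S (\<lambda>t. purity ((1 - t) *\<^sub>R A + t *\<^sub>R B))"
  unfolding purity_def trace_matrix_mult by (simp add: scaleR_conv_of_real) (intro continuous_intros)

lemma exists_convex_density_of_purity:
  fixes A B :: "complex^'n^'n"
  assumes "density A" "density B" "purity A \<le> P" "P \<le> purity B"
  obtains t where "0 \<le> t" "t \<le> 1"
    "density ((1 - t) *\<^sub>R A + t *\<^sub>R B)" "purity ((1 - t) *\<^sub>R A + t *\<^sub>R B) = P"
proof -
  obtain t where "0 \<le> t" "t \<le> 1" "purity ((1 - t) *\<^sub>R A + t *\<^sub>R B) = P"
    using IVT'[of "\<lambda>t. purity ((1 - t) *\<^sub>R A + t *\<^sub>R B)" 0 P 1,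
        OF _ _ _ continuous_on_purity_segment] assms(3,4)
    by auto
  with density_convex[OF assms(1,2)] show ?thesis
    using that by blast
qed

lemma exists_density_of_purity:
  assumes "1 / real CARD('n) \<le> P" "P \<le> 1"
  obtains \<rho> :: "complex^'n^'n" where "density \<rho>" "purity \<rho> = P"
  using exists_convex_density_of_purity[OF density_maximally_mixed density_outer[OF norm_axis_1_complex]]
    purity_maximally_mixed purity_outer[OF norm_axis_1_complex] assms
  by metis

lemma ex_ge_convex_combination:
  fixes p f :: "'k \<Rightarrow> real"
  assumes "finite K" "\<And>k. k \<in> K \<Longrightarrow> 0 \<le> p k" "(\<Sum>k\<in>K. p k) = 1"
  shows "\<exists>k\<in>K. 0 < p k \<and> (\<Sum>j\<in>K. p j * f j) \<le> f k"
proof (rule ccontr)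
  define s where "s = (\<Sum>j\<in>K. p j * f j)"
  assume "\<not> (\<exists>k\<in>K. 0 < p k \<and> s \<le> f k)"
  then have less: "f k < s" if "k \<in> K" "0 < p k" for k
    using that by force
  obtain k where "k \<in> K" "0 < p k"
    using assms(2,3) by (metis less_eq_real_def sum.neutral zero_neq_one)
  have "(\<Sum>j\<in>K. p j * f j) < (\<Sum>j\<in>K. p j * s)"
  proof (rule sum_strict_mono_ex1[OF assms(1)])
    show "\<forall>j\<in>K. p j * f j \<le> p j * s"
      using less assms(2) by (metis less_eq_real_def mult_left_mono mult_zero_left)
    have "p k * f k < p k * s"
      using less[OF \<open>k \<in> K\<close> \<open>0 < p k\<close>] \<open>0 < p k\<close> by simp
    with \<open>k \<in> K\<close> show "\<exists>j\<in>K. p j * f j < p j * s"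
      by blast
  qed
  also have "\<dots> = s"
    by (simp add: assms(3) flip: sum_distrib_right)
  finally show False
    by (simp add: s_def)
qed

lemma exists_pure_state_ge:
  fixes M \<rho> :: "complex^'n^'n"
  assumes "density \<rho>"
  obtains u where "norm u = 1" "Re (trace (M ** \<rho>)) \<le> Re (trace (M ** outer u))"
proof -
  obtain W :: "'n \<Rightarrow> complex^'n" where W: "\<rho> = (\<Sum>k\<in>UNIV. outer (W k))"
    using assms psd_eq_sum_outer unfolding density_def by blast
  define p where "p k = (norm (W k))^2" for k
  define u where "u k = (1 / norm (W k)) *\<^sub>R W k" for k
  have "(\<Sum>k\<in>UNIV. p k) = Re (trace \<rho>)"
    by (simp add: W trace_sum trace_outer p_def)
  then have sum_p: "(\<Sum>k\<in>UNIV. p k) = 1"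
    using assms by (simp add: density_def)
  have "W k = norm (W k) *\<^sub>R u k" for k
    by (cases "W k = 0") (simp_all add: u_def)
  then have "sesq M (W k) (W k) = of_real (p k) * sesq M (u k) (u k)" for k
    by (metis (no_types) sesq_scaleR_left sesq_scaleR_right mult.assoc of_real_mult
        power2_eq_square p_def)
  then have "Re (trace (M ** \<rho>)) = (\<Sum>k\<in>UNIV. p k * Re (trace (M ** outer (u k))))"
    by (simp add: W trace_mult_sum trace_mult_outer)
  moreover obtain k where "0 < p k"
    "(\<Sum>j\<in>UNIV. p j * Re (trace (M ** outer (u j)))) \<le> Re (trace (M ** outer (u k)))"
    using ex_ge_convex_combination[OF finite_class.finite_UNIV _ sum_p,
        of "\<lambda>j. Re (trace (M ** outer (u j)))"] by (auto simp: p_def)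
  moreover have "norm (u k) = 1"
    using \<open>0 < p k\<close> by (simp add: u_def p_def)
  ultimately show ?thesis
    using that by metis
qed

lemma exists_density_of_purity_ge:
  fixes M \<rho> :: "complex^'n^'n"
  assumes "density \<rho>" "purity \<rho> \<le> Q" "Q \<le> 1"
  obtains \<rho>' where "density \<rho>'" "purity \<rho>' = Q"
    "Re (trace (M ** \<rho>)) \<le> Re (trace (M ** \<rho>'))"
proof -
  obtain u where u: "norm u = 1" "Re (trace (M ** \<rho>)) \<le> Re (trace (M ** outer u))"
    using exists_pure_state_ge[OF assms(1)] .
  obtain t where t: "0 \<le> t" "t \<le> 1" "density ((1 - t) *\<^sub>R \<rho> + t *\<^sub>R outer u)"
    "purity ((1 - t) *\<^sub>R \<rho> + t *\<^sub>R outer u) = Q"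
    using exists_convex_density_of_purity[OF assms(1) density_outer[OF u(1)]] assms(2,3)
      purity_outer[OF u(1)] by metis
  have "Re (trace (M ** ((1 - t) *\<^sub>R \<rho> + t *\<^sub>R outer u)))
      = Re (trace (M ** \<rho>)) + t * (Re (trace (M ** outer u)) - Re (trace (M ** \<rho>)))"
    by (simp add: matrix_add_ldistrib trace_add trace_mult_scaleR) (simp add: algebra_simps)
  also have "\<dots> \<ge> Re (trace (M ** \<rho>))"
    using u(2) t(1) by simp
  finally show ?thesis
    using that t(3,4) by blast
qed

definition Rval_operator ::
  "('a::finite \<Rightarrow> 'a \<Rightarrow> 'x::finite \<Rightarrow> 'x \<Rightarrow> real) \<Rightarrow> ('a \<Rightarrow> 'x \<Rightarrow> complex^'n^'n)
     \<Rightarrow> ('a \<Rightarrow> 'x \<Rightarrow> complex^'n^'n) \<Rightarrow> complex^'n^'n" where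
  "Rval_operator \<alpha> E \<sigma> = (\<Sum>a\<in>UNIV. \<Sum>x\<in>UNIV.
     (\<Sum>b\<in>UNIV. \<Sum>y\<in>UNIV. \<alpha> a b x y * Re (trace (E b y ** \<sigma> a x))) *\<^sub>R E a x)"

lemma Rval_eq_trace: "Rval \<alpha> \<rho> E \<sigma> = Re (trace (Rval_operator \<alpha> E \<sigma> ** \<rho>))"
proof -
  have "Re (trace (Rval_operator \<alpha> E \<sigma> ** \<rho>)) = (\<Sum>a\<in>UNIV. \<Sum>x\<in>UNIV. \<Sum>b\<in>UNIV. \<Sum>y\<in>UNIV.
      \<alpha> a b x y * prob \<rho> E \<sigma> a b x y)"
    by (simp add: Rval_operator_def trace_sum_mult trace_scaleR_mult prob_def
        sum_distrib_left sum_distrib_right mult_ac)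
  also have "\<dots> = Rval \<alpha> \<rho> E \<sigma>"
    unfolding Rval_def by (rule sum.cong[OF refl], rule sum.swap)
  finally show ?thesis ..
qed

lemma Rval_le_sum_abs:
  assumes "valid_instrument E \<sigma>" "density \<rho>"
  shows "Rval \<alpha> \<rho> E \<sigma> \<le> (\<Sum>a\<in>UNIV. \<Sum>b\<in>UNIV. \<Sum>x\<in>UNIV. \<Sum>y\<in>UNIV. \<bar>\<alpha> a b x y\<bar>)"
  unfolding Rval_def
proof (intro sum_mono)
  fix a b x y
  have bounds: "0 \<le> Re (trace (E c z ** \<tau>)) \<and> Re (trace (E c z ** \<tau>)) \<le> 1"
    if "density \<tau>" for c z \<tau>
    using assms(1) that trace_psd_mult_nonneg povm_trace_le_1[of "\<lambda>c. E c z"]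
    unfolding valid_instrument_def density_def by blast
  have "density (\<sigma> a x)"
    using assms(1) unfolding valid_instrument_def by blast
  then have "\<bar>prob \<rho> E \<sigma> a b x y\<bar> \<le> 1"
    using bounds[OF assms(2), of a x] bounds[of "\<sigma> a x" b y]
    unfolding prob_def abs_mult by (simp add: mult_le_one)
  then show "\<alpha> a b x y * prob \<rho> E \<sigma> a b x y \<le> \<bar>\<alpha> a b x y\<bar>"
    by (metis abs_ge_self abs_mult mult_left_le abs_ge_zero order_trans)
qed

lemma valid_instrument_trivial:
  assumes "density \<rho>"
  shows "valid_instrument (\<lambda>a x. if a = a0 then mat 1 else 0) (\<lambda>a x. \<rho>)"
  using assms by (simp add: valid_instrument_def psd_mat_1 psd_0)

theorem mainTheorem5:
  fixes \<alpha> :: "'a::finite \<Rightarrow> 'a \<Rightarrow> 'x::finite \<Rightarrow> 'x \<Rightarrow> real"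
  assumes "CARD('n::finite) \<ge> 2"
    and "1 / real CARD('n) \<le> P" and "P \<le> Q" and "Q \<le> 1"
  shows "Rmax \<alpha> TYPE('n) P \<le> Rmax \<alpha> TYPE('n) Q"
proof -
  let ?values = "\<lambda>P. {Rval \<alpha> \<rho> E \<sigma> | (\<rho>::complex^'n^'n) E \<sigma>.
    density \<rho> \<and> purity \<rho> = P \<and> valid_instrument E \<sigma>}"
  obtain \<rho> :: "complex^'n^'n" where "density \<rho>" "purity \<rho> = P"
    using exists_density_of_purity assms(2-4) by (metis order_trans)
  then have "?values P \<noteq> {}"
    using valid_instrument_trivial by blast
  moreover have "bdd_above (?values Q)"
    using Rval_le_sum_abs by (intro bdd_aboveI) blast
  moreover have "\<exists>w \<in> ?values Q. v \<le> w" if "v \<in> ?values P" for v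
  proof -
    obtain \<rho> :: "complex^'n^'n" and E \<sigma>
      where v: "v = Rval \<alpha> \<rho> E \<sigma>" "density \<rho>" "purity \<rho> = P" "valid_instrument E \<sigma>"
      using \<open>v \<in> ?values P\<close> by blast
    obtain \<rho>' where "density \<rho>'" "purity \<rho>' = Q" "v \<le> Rval \<alpha> \<rho>' E \<sigma>"
      using exists_density_of_purity_ge[OF v(2), of Q "Rval_operator \<alpha> E \<sigma>"] v assms(3,4)
      by (auto simp: Rval_eq_trace)
    with v(4) show ?thesis
      by blast
  qed
  ultimately show ?thesis
    unfolding Rmax_def by (intro cSup_mono) auto
qed

end
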